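(* Let $0<\epsilon<\pi$. For $i\in\mathbb{Z}_{>0}$ odd, the inclusion $\Delta_{\mathbb{CP}^n}\times\{i\pi+\epsilon\}\to Z_i\cap Z_{i+1}^c$ is a homotopy equivalence. For $i\in\mathbb{Z}_{>0}$ even, the inclusion $\bigcup_{x\in\mathbb{CP}^n}\{x\}\times D_x\times\{i\pi+\epsilon\}\to Z_i\cap Z_{i+1}^c$ is a homotopy equivalence.
   Context: $\mathbb{CP}^n$ has the Fubini–Study metric (Kähler form $\sum2\sqrt{-1}h_{ij}dz_i\wedge d\bar z_j$, $h_{ij}=\frac{(1+\sum_k|z_k|^2)\delta_{ij}-\bar z_iz_j}{(1+\sum_k|z_k|^2)^2}$), geodesic distance $\mathrm{dist}$, diameter $\pi$. $\Delta_{\mathbb{CP}^n}$ is the diagonal. For $x\in\mathbb{CP}^n$, $D_x=\{y\mid\mathrm{dist}(x,y)=\pi\}$. For $i>0$, $Z_i=\{(x,y,t)\mid\mathrm{dist}(x,y)<t-(i-1)\pi\}$ if $i$ odd and $Z_i=\{(x,y,t)\mid\mathrm{dist}(x,D_y)<t-(i-1)\pi\}$ if $i$ even; $Z^c$ denotes the complement in $\mathbb{CP}^n\times\mathbb{CP}^n\times\mathbb{R}$. *)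

theory Defs
  imports "HOL-Analysis.Analysis"
begin

text \<open>Model of CP^n: a point [u] (u a unit vector in C^(n+1), index type 'm with
  CARD('m) = n+1) is represented by the rank-one Hermitian projector u u^*, a point
  of the Euclidean space complex^'m^'m; CP^n carries the subspace topology.\<close>

definition proj_line :: "complex^'m \<Rightarrow> complex^'m^'m" where
  "proj_line u = (\<chi> i j. u$i * cnj (u$j))"

definition CP :: "(complex^'m^'m) set" where
  "CP = {P. \<exists>u::complex^'m. norm u = 1 \<and> P = proj_line u}"

text \<open>Geodesic distance of the Fubini-Study metric normalised to diameter pi:
  dist([u],[v]) = 2 arccos |<u,v>|, and trace(P Q) = |<u,v>|^2.\<close>

definition fs_dist :: "complex^'m^'m \<Rightarrow> complex^'m^'m \<Rightarrow> real" where
  "fs_dist P Q = 2 * arccos (sqrt (Re (trace (P ** Q))))"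

definition antipodal :: "complex^'m^'m \<Rightarrow> (complex^'m^'m) set" where
  "antipodal x = {y \<in> CP. fs_dist x y = pi}"

definition fs_setdist :: "complex^'m^'m \<Rightarrow> (complex^'m^'m) set \<Rightarrow> real" where
  "fs_setdist x S = Inf (fs_dist x ` S)"

definition Zset :: "nat \<Rightarrow> ((complex^'m^'m) \<times> (complex^'m^'m) \<times> real) set" where
  "Zset i = {(x, y, t). x \<in> CP \<and> y \<in> CP \<and>
     (if odd i then fs_dist x y < t - (real i - 1) * pi
      else fs_setdist x (antipodal y) < t - (real i - 1) * pi)}"

definition homotopy_equivalence_map ::
  "'a topology \<Rightarrow> 'b topology \<Rightarrow> ('a \<Rightarrow> 'b) \<Rightarrow> bool" where
  "homotopy_equivalence_map X Y f \<longleftrightarrow> continuous_map X Y f \<and>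
     (\<exists>g. continuous_map Y X g \<and>
          homotopic_with (\<lambda>h. True) X X (g \<circ> f) id \<and>
          homotopic_with (\<lambda>h. True) Y Y (f \<circ> g) id)"

end

theory Submission
  imports Defs
begin

text \<open>Write \<open>d = dist(x,y)\<close> and \<open>s = t - i\<pi>\<close>. By Bessel's inequality the distance from
  \<open>x\<close> to \<open>D\<^sub>y\<close> is \<open>\<pi> - d\<close>, so for odd \<open>i\<close> the layer \<open>Z\<^sub>i \<inter> Z\<^sub>i\<^sub>+\<^sub>1\<^sup>c\<close> is
  \<open>{d - \<pi> < s \<le> \<pi> - d}\<close>, and for even \<open>i\<close> it is the same region with \<open>d\<close> replaced
  by \<open>\<pi> - d\<close>. Such a region deformation retracts onto the zero set of the relevant function
  at height \<open>s = \<epsilon>\<close>: move \<open>y\<close> along the projective line through \<open>x\<close> and \<open>y\<close>, towards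
  \<open>x\<close> for odd \<open>i\<close> and away from \<open>x\<close> onto \<open>D\<^sub>x\<close> for even \<open>i\<close>, and then move \<open>s\<close>
  linearly to \<open>\<epsilon>\<close>.\<close>

definition cinner :: "complex^'n \<Rightarrow> complex^'n \<Rightarrow> complex" where
  "cinner x y = (\<Sum>k\<in>UNIV. x$k * cnj (y$k))"

lemma cinner_add_left: "cinner (x + y) z = cinner x z + cinner y z"
  by (simp add: cinner_def distrib_right sum.distrib)

lemma cinner_add_right: "cinner x (y + z) = cinner x y + cinner x z"
  by (simp add: cinner_def distrib_left sum.distrib)

lemma cinner_diff_left: "cinner (x - y) z = cinner x z - cinner y z"
  by (simp add: cinner_def left_diff_distrib sum_subtractf)

lemma cinner_diff_right: "cinner x (y - z) = cinner x y - cinner x z"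
  by (simp add: cinner_def right_diff_distrib sum_subtractf)

lemma cinner_scale_left: "cinner (c *s x) y = c * cinner x y"
  by (simp add: cinner_def sum_distrib_left mult.assoc)

lemma cinner_scale_right: "cinner x (c *s y) = cnj c * cinner x y"
  by (simp add: cinner_def sum_distrib_left algebra_simps)

lemma cinner_scaleR_left: "cinner (c *\<^sub>R x) y = of_real c * cinner x y"
  unfolding cinner_def vector_scaleR_component
  by (simp add: sum_distrib_left algebra_simps scaleR_conv_of_real)

lemma cinner_scaleR_right: "cinner x (c *\<^sub>R y) = of_real c * cinner x y"
  unfolding cinner_def vector_scaleR_component
  by (simp add: sum_distrib_left algebra_simps scaleR_conv_of_real)

lemma cinner_commute: "cinner y x = cnj (cinner x y)"
  by (simp add: cinner_def mult.commute)

lemma cinner_self: "cinner x x = of_real (norm x ^ 2)"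
proof -
  have "cinner x x = (\<Sum>k\<in>UNIV. of_real (norm (x$k) ^ 2))"
    unfolding cinner_def by (rule sum.cong) (simp_all add: complex_norm_square[symmetric])
  also have "\<dots> = of_real (norm x ^ 2)"
    by (simp add: norm_vec_def L2_set_def sum_nonneg)
  finally show ?thesis .
qed

lemma cinner_axis: "cinner x (axis i 1) = x $ i"
  unfolding cinner_def axis_def by (simp add: if_distrib cong: if_cong)

lemma cnj_mult_self: "cnj a * a = of_real (cmod a ^ 2)"
  by (metis complex_norm_square mult.commute)

lemma norm_eq_of_cinner_self: "norm x ^ 2 = r \<longleftrightarrow> cinner x x = of_real r"
  by (simp add: cinner_self del: of_real_power)

lemma cinner_residual:
  assumes "norm z = 1"
  shows "cinner (x - cinner x z *s z) z = 0"
    and "norm (x - cinner x z *s z) ^ 2 = norm x ^ 2 - cmod (cinner x z) ^ 2"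
proof -
  have z: "cinner z z = 1" using assms by (simp add: cinner_self)
  show "cinner (x - cinner x z *s z) z = 0"
    by (simp add: cinner_diff_left cinner_scale_left z)
  have "cinner (x - cinner x z *s z) (x - cinner x z *s z) = cinner x x - cnj (cinner x z) * cinner x z"
    by (simp add: cinner_diff_left cinner_diff_right cinner_scale_left cinner_scale_right z
        cinner_commute[of z x])
  thus "norm (x - cinner x z *s z) ^ 2 = norm x ^ 2 - cmod (cinner x z) ^ 2"
    unfolding norm_eq_of_cinner_self by (simp add: cinner_self cnj_mult_self)
qed

lemma cmod_cinner_le:
  assumes "norm z = 1" shows "cmod (cinner x z) \<le> norm x"
proof -
  have "cmod (cinner x z) ^ 2 \<le> norm x ^ 2"
    using cinner_residual(2)[OF assms, of x] zero_le_power2[of "norm (x - cinner x z *s z)"]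
    by linarith
  thus ?thesis using power2_le_imp_le norm_ge_zero by blast
qed

lemma cinner_bessel:
  assumes "norm u = 1" "norm v = 1" "norm z = 1" "cinner z v = 0"
  shows "cmod (cinner u z) ^ 2 \<le> 1 - cmod (cinner u v) ^ 2"
proof -
  define r where "r = u - cinner u v *s v"
  have "cinner u z = cinner r z"
    using assms(4) by (simp add: r_def cinner_diff_left cinner_scale_left cinner_commute[of v z])
  hence "cmod (cinner u z) \<le> norm r" using cmod_cinner_le[OF assms(3)] by simp
  hence "cmod (cinner u z) ^ 2 \<le> norm r ^ 2" by (simp add: power_mono)
  thus ?thesis using cinner_residual(2)[OF assms(2), of u] assms(1) by (simp add: r_def)
qed

lemma exists_unit_orthogonal:
  fixes v :: "complex^'n"
  assumes "CARD('n) \<ge> 2"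
  shows "\<exists>z. norm z = 1 \<and> cinner z v = 0"
proof -
  obtain i j :: 'n where ij: "i \<noteq> j"
  proof -
    have "\<not> (\<forall>i j::'n. i = j)"
      using assms card_le_Suc0_iff_eq[of "UNIV :: 'n set"] by auto
    thus ?thesis using that by blast
  qed
  define z where "z = cnj (v$j) *s axis i 1 - cnj (v$i) *s axis j 1"
  have orth: "cinner z v = 0"
    by (simp add: z_def cinner_diff_left cinner_scale_left cinner_commute[of "axis _ 1" v]
        cinner_axis mult.commute)
  show ?thesis
  proof (cases "z = 0")
    case True
    hence "z $ j = 0" by simp
    hence "v$i = 0" using ij by (simp add: z_def axis_def)
    thus ?thesis by (intro exI[of _ "axis i 1"]) (simp add: cinner_commute[of _ v] cinner_axis)
  next
    case False
    thus ?thesis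
      by (intro exI[of _ "(1 / norm z) *\<^sub>R z"])
        (simp add: orth cinner_scaleR_left)
  qed
qed

lemma cinner_bessel_sharp:
  fixes u v :: "complex^'n"
  assumes "CARD('n) \<ge> 2" "norm u = 1" "norm v = 1"
  shows "\<exists>z. norm z = 1 \<and> cinner z v = 0 \<and> cmod (cinner u z) ^ 2 = 1 - cmod (cinner u v) ^ 2"
proof -
  define r where "r = u - cinner u v *s v"
  have r_orth: "cinner r v = 0" and r_norm: "norm r ^ 2 = 1 - cmod (cinner u v) ^ 2"
    using cinner_residual[OF assms(3), of u] assms(2) by (simp_all add: r_def)
  have cinner_u: "cinner u z = cinner r z" if "cinner z v = 0" for z
    using that by (simp add: r_def cinner_diff_left cinner_scale_left cinner_commute[of v z])
  show ?thesis
  proof (cases "r = 0")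
    case True
    obtain z where "norm z = 1" "cinner z v = 0" using exists_unit_orthogonal[OF assms(1)] by blast
    thus ?thesis using cinner_u r_norm True by (intro exI[of _ z]) (simp add: cinner_def)
  next
    case False
    define z where "z = (1 / norm r) *\<^sub>R r"
    have "cinner z v = 0" by (simp add: z_def cinner_scaleR_left r_orth)
    moreover have "cinner r z = of_real (norm r)"
      using False by (simp add: z_def cinner_scaleR_right cinner_self power2_eq_square)
    ultimately show ?thesis
      using cinner_u r_norm False by (intro exI[of _ z]) (simp add: z_def)
  qed
qed

definition overlap :: "complex^'n^'n \<Rightarrow> complex^'n^'n \<Rightarrow> real" where
  "overlap P Q = Re (trace (P ** Q))"

lemma proj_line_mult:
  "proj_line u ** proj_line v = (\<chi> i j. cinner v u * (u$i * cnj (v$j)))"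
  unfolding proj_line_def matrix_matrix_mult_def cinner_def
  by (simp add: vec_eq_iff sum_distrib_left sum_distrib_right algebra_simps)

lemma overlap_proj_line: "overlap (proj_line u) (proj_line v) = cmod (cinner u v) ^ 2"
proof -
  have "trace (proj_line u ** proj_line v) = cinner v u * cinner u v"
    unfolding proj_line_mult trace_def cinner_def sum_product
    by (subst sum.swap) (simp add: sum_distrib_left algebra_simps)
  thus ?thesis
    unfolding overlap_def cinner_commute[of v u] cnj_mult_self by simp
qed

lemma CP_obtain:
  assumes "P \<in> CP" obtains u where "norm u = 1" "P = proj_line u"
  using assms unfolding CP_def by blast

lemma overlap_bounds:
  assumes "P \<in> CP" "Q \<in> CP" shows "0 \<le> overlap P Q" "overlap P Q \<le> 1"
proof -
  obtain u v where "norm u = 1" "P = proj_line u" "norm v = 1" "Q = proj_line v"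
    using assms CP_obtain by metis
  thus "0 \<le> overlap P Q" "overlap P Q \<le> 1"
    using cmod_cinner_le[of v u] by (auto simp: overlap_proj_line power_le_one)
qed

lemma overlap_self: "P \<in> CP \<Longrightarrow> overlap P P = 1"
  by (erule CP_obtain) (simp add: overlap_proj_line cinner_self)

lemma fs_dist_overlap: "fs_dist P Q = 2 * arccos (sqrt (overlap P Q))"
  by (simp add: fs_dist_def overlap_def)

lemma arccos_sqrt_antimono:
  "0 \<le> c \<Longrightarrow> c \<le> c' \<Longrightarrow> c' \<le> 1 \<Longrightarrow> arccos (sqrt c') \<le> arccos (sqrt c)"
  by (subst arccos_le_mono) auto

lemma fs_dist_bounds:
  assumes "P \<in> CP" "Q \<in> CP" shows "0 \<le> fs_dist P Q" "fs_dist P Q \<le> pi"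
proof -
  have s: "0 \<le> sqrt (overlap P Q)" "sqrt (overlap P Q) \<le> 1"
    using overlap_bounds[OF assms] by auto
  moreover have "-1 \<le> sqrt (overlap P Q)" using s by linarith
  ultimately have "0 \<le> arccos (sqrt (overlap P Q))" "arccos (sqrt (overlap P Q)) \<le> pi / 2"
    using arccos_lbound arccos_le_pi2 by blast+
  thus "0 \<le> fs_dist P Q" "fs_dist P Q \<le> pi"
    by (auto simp: fs_dist_overlap)
qed

lemma fs_dist_le_iff:
  assumes "P \<in> CP" "Q \<in> CP" "P' \<in> CP" "Q' \<in> CP"
  shows "fs_dist P Q \<le> fs_dist P' Q' \<longleftrightarrow> overlap P' Q' \<le> overlap P Q"
  using overlap_bounds[OF assms(1,2)] overlap_bounds[OF assms(3,4)]
  by (simp add: fs_dist_overlap arccos_le_mono)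

lemma fs_dist_eq_pi_iff:
  assumes "P \<in> CP" "Q \<in> CP" shows "fs_dist P Q = pi \<longleftrightarrow> overlap P Q = 0"
proof
  assume "fs_dist P Q = pi"
  hence "arccos (sqrt (overlap P Q)) = pi / 2" by (simp add: fs_dist_overlap)
  hence "sqrt (overlap P Q) = 0"
    using overlap_bounds[OF assms] arccos_eq_iff[of "sqrt (overlap P Q)" 0] by simp
  thus "overlap P Q = 0" by simp
qed (simp add: fs_dist_overlap)

lemma fs_dist_lt_pi_iff:
  assumes "P \<in> CP" "Q \<in> CP" shows "fs_dist P Q < pi \<longleftrightarrow> 0 < overlap P Q"
  using fs_dist_bounds[OF assms] fs_dist_eq_pi_iff[OF assms] overlap_bounds[OF assms] by auto

lemma fs_dist_pos_iff:
  assumes "P \<in> CP" "Q \<in> CP" shows "0 < fs_dist P Q \<longleftrightarrow> overlap P Q < 1"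
  using overlap_bounds[OF assms] arccos_less_mono[of 1 "sqrt (overlap P Q)"]
  by (simp add: fs_dist_overlap)

lemma antipodal_iff:
  assumes "Q \<in> CP" shows "Z \<in> antipodal Q \<longleftrightarrow> Z \<in> CP \<and> overlap Q Z = 0"
  using fs_dist_eq_pi_iff[OF assms] unfolding antipodal_def by blast

lemma arccos_sqrt_complement:
  assumes "0 \<le> c" "c \<le> 1"
  shows "arccos (sqrt (1 - c)) = pi / 2 - arccos (sqrt c)"
proof -
  have "-1 \<le> sqrt c" using real_sqrt_ge_zero[OF assms(1)] by linarith
  thus ?thesis
    using assms arcsin_arccos_sqrt_pos[of "sqrt c"] arcsin_arccos_eq[of "sqrt c"] by simp
qed

lemma fs_setdist_antipodal:
  fixes P Q :: "complex^'n^'n"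
  assumes "CARD('n) \<ge> 2" "P \<in> CP" "Q \<in> CP"
  shows "fs_setdist P (antipodal Q) = pi - fs_dist P Q"
proof -
  obtain u v where u: "norm u = 1" "P = proj_line u" and v: "norm v = 1" "Q = proj_line v"
    using assms(2,3) CP_obtain by metis
  have bound: "pi - fs_dist P Q = 2 * arccos (sqrt (1 - overlap P Q))"
    using arccos_sqrt_complement overlap_bounds[OF assms(2,3)] by (simp add: fs_dist_overlap)
  obtain z where z: "norm z = 1" "cinner z v = 0"
    "cmod (cinner u z) ^ 2 = 1 - cmod (cinner u v) ^ 2"
    using cinner_bessel_sharp[OF assms(1) u(1) v(1)] by blast
  have "proj_line z \<in> antipodal Q"
    unfolding antipodal_iff[OF assms(3)] using z v
    by (auto simp: CP_def overlap_proj_line cinner_commute[of v z])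
  moreover have "fs_dist P (proj_line z) = 2 * arccos (sqrt (1 - overlap P Q))"
    using z u v by (simp add: fs_dist_overlap overlap_proj_line)
  moreover have "2 * arccos (sqrt (1 - overlap P Q)) \<le> fs_dist P Z" if "Z \<in> antipodal Q" for Z
  proof -
    have Z: "Z \<in> CP" "overlap Q Z = 0" using that antipodal_iff[OF assms(3)] by auto
    then obtain y where y: "norm y = 1" "Z = proj_line y" by (auto elim: CP_obtain)
    hence "cinner y v = 0"
      using Z(2) by (simp add: v(2) overlap_proj_line cinner_commute[of v y])
    have "overlap P Z \<le> 1 - overlap P Q"
      using cinner_bessel[OF u(1) v(1) y(1) \<open>cinner y v = 0\<close>]
      by (simp add: u(2) v(2) y(2) overlap_proj_line)
    moreover have "0 \<le> overlap P Z" "0 \<le> overlap P Q" "overlap P Q \<le> 1"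
      using overlap_bounds assms(2,3) Z(1) by auto
    ultimately show ?thesis
      unfolding fs_dist_overlap by (simp add: arccos_sqrt_antimono)
  qed
  ultimately show ?thesis
    unfolding fs_setdist_def bound by (intro cInf_eq_minimum) (auto intro!: rev_image_eqI)
qed

section \<open>Moving along a projective line\<close>

text \<open>For \<open>P = [u]\<close> and \<open>Q = [v]\<close> this is the point \<open>[\<alpha> v + \<beta> \<langle>v,u\<rangle> u]\<close>
  (see \<open>proj_line_comb\<close>); the factor \<open>\<langle>v,u\<rangle>\<close> makes it independent of the chosen
  representatives, so it can be written in terms of \<open>P\<close> and \<open>Q\<close> alone.\<close>

definition proj_comb :: "real \<Rightarrow> real \<Rightarrow> complex^'n^'n \<Rightarrow> complex^'n^'n \<Rightarrow> complex^'n^'n" where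
  "proj_comb \<alpha> \<beta> P Q = (1 / (\<alpha>^2 + (2*\<alpha>*\<beta> + \<beta>^2) * overlap P Q)) *\<^sub>R
     (\<alpha>^2 *\<^sub>R Q + (\<alpha>*\<beta>) *\<^sub>R (P ** Q + Q ** P) + (\<beta>^2 * overlap P Q) *\<^sub>R P)"

lemma proj_line_scaleR: "proj_line (k *\<^sub>R w) = k^2 *\<^sub>R proj_line w"
  unfolding proj_line_def vec_eq_iff
  by (simp add: vector_scaleR_component) (simp add: scaleR_conv_of_real power2_eq_square)

lemma proj_line_comb:
  fixes u v :: "complex^'n" and \<alpha> \<beta> :: real
  defines "w \<equiv> of_real \<alpha> *s v + (of_real \<beta> * cinner v u) *s u"
  shows "proj_line w = \<alpha>^2 *\<^sub>R proj_line v
      + (\<alpha>*\<beta>) *\<^sub>R (proj_line u ** proj_line v + proj_line v ** proj_line u)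
      + (\<beta>^2 * overlap (proj_line u) (proj_line v)) *\<^sub>R proj_line u"
proof -
  have "of_real (overlap (proj_line u) (proj_line v)) = cinner v u * cnj (cinner v u)"
    unfolding overlap_proj_line cinner_commute[of u v] complex_mod_cnj
    by (rule complex_norm_square)
  thus ?thesis
    unfolding vec_eq_iff proj_line_mult w_def
    by (simp add: vector_scaleR_component)
      (simp add: proj_line_def scaleR_conv_of_real cinner_commute[of u v] algebra_simps
        power2_eq_square)
qed

lemma cinner_comb:
  fixes u v :: "complex^'n" and \<alpha> \<beta> :: real
  assumes "norm u = 1" "norm v = 1"
  defines "w \<equiv> of_real \<alpha> *s v + (of_real \<beta> * cinner v u) *s u"
  shows "cinner w w = of_real (\<alpha>^2 + (2*\<alpha>*\<beta> + \<beta>^2) * cmod (cinner u v) ^ 2)"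
    and "cinner u w = of_real (\<alpha> + \<beta>) * cinner u v"
proof -
  have unit: "cinner u u = 1" "cinner v v = 1" using assms(1,2) by (simp_all add: cinner_self)
  have "complex_of_real (\<alpha>^2 + (2*\<alpha>*\<beta> + \<beta>^2) * cmod (cinner u v) ^ 2)
     = of_real \<alpha> * of_real \<alpha> + (2 * of_real \<alpha> * of_real \<beta> + of_real \<beta> * of_real \<beta>)
       * (cnj (cinner u v) * cinner u v)"
    by (simp only: cnj_mult_self of_real_add of_real_mult of_real_power of_real_numeral
        power2_eq_square)
  thus "cinner w w = of_real (\<alpha>^2 + (2*\<alpha>*\<beta> + \<beta>^2) * cmod (cinner u v) ^ 2)"
    unfolding w_def
    by (simp add: cinner_add_left cinner_add_right cinner_scale_left cinner_scale_right unit
        cinner_commute[of v u] algebra_simps)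
  show "cinner u w = of_real (\<alpha> + \<beta>) * cinner u v"
    unfolding w_def
    by (simp add: cinner_add_right cinner_scale_right unit cinner_commute[of v u] algebra_simps)
qed

lemma proj_comb_CP:
  assumes "P \<in> CP" "Q \<in> CP" and pos: "0 < \<alpha>^2 + (2*\<alpha>*\<beta> + \<beta>^2) * overlap P Q"
  shows "proj_comb \<alpha> \<beta> P Q \<in> CP"
    and "overlap P (proj_comb \<alpha> \<beta> P Q)
           = (\<alpha>+\<beta>)^2 * overlap P Q / (\<alpha>^2 + (2*\<alpha>*\<beta> + \<beta>^2) * overlap P Q)"
proof -
  obtain u v where u: "norm u = 1" "P = proj_line u" and v: "norm v = 1" "Q = proj_line v"
    using assms(1,2) CP_obtain by metis
  define d where "d = \<alpha>^2 + (2*\<alpha>*\<beta> + \<beta>^2) * overlap P Q"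
  define w where "w = of_real \<alpha> *s v + (of_real \<beta> * cinner v u) *s u"
  have norm_w: "norm w ^ 2 = d"
    unfolding norm_eq_of_cinner_self w_def cinner_comb(1)[OF u(1) v(1)]
    by (simp add: d_def u(2) v(2) overlap_proj_line)
  hence "w \<noteq> 0" using pos by (auto simp: d_def)
  define z where "z = (1 / norm w) *\<^sub>R w"
  have z: "norm z = 1" using \<open>w \<noteq> 0\<close> by (simp add: z_def)
  have "proj_comb \<alpha> \<beta> P Q = (1 / d) *\<^sub>R proj_line w"
    unfolding proj_comb_def w_def proj_line_comb u(2) v(2) d_def ..
  also have "\<dots> = proj_line z"
    by (simp add: z_def proj_line_scaleR norm_w power_divide)
  finally have comb_z: "proj_comb \<alpha> \<beta> P Q = proj_line z" .
  thus "proj_comb \<alpha> \<beta> P Q \<in> CP" using z by (auto simp: CP_def)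
  have "cinner u z = of_real (1 / norm w) * (of_real (\<alpha> + \<beta>) * cinner u v)"
    unfolding z_def cinner_scaleR_right w_def cinner_comb(2)[OF u(1) v(1)] ..
  hence "cmod (cinner u z) = \<bar>1 / norm w\<bar> * (\<bar>\<alpha> + \<beta>\<bar> * cmod (cinner u v))"
    by (simp only: norm_mult norm_of_real)
  hence "cmod (cinner u z) ^ 2 = (\<alpha> + \<beta>)^2 * cmod (cinner u v) ^ 2 / norm w ^ 2"
    by (simp add: power_mult_distrib power_divide)
  thus "overlap P (proj_comb \<alpha> \<beta> P Q)
           = (\<alpha>+\<beta>)^2 * overlap P Q / (\<alpha>^2 + (2*\<alpha>*\<beta> + \<beta>^2) * overlap P Q)"
    unfolding comb_z by (simp add: u(2) v(2) overlap_proj_line norm_w d_def)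
qed

lemma proj_comb_1_0: "proj_comb 1 0 P Q = Q"
  by (simp add: proj_comb_def)

lemma proj_comb_0_1: "overlap P Q \<noteq> 0 \<Longrightarrow> proj_comb 0 1 P Q = P"
  by (simp add: proj_comb_def)

lemma proj_comb_orthogonal:
  assumes "P \<in> CP" "Q \<in> CP" "overlap P Q = 0" "\<alpha> \<noteq> 0"
  shows "proj_comb \<alpha> \<beta> P Q = Q"
proof -
  obtain u v where u: "norm u = 1" "P = proj_line u" and v: "norm v = 1" "Q = proj_line v"
    using assms(1,2) CP_obtain by metis
  have "cinner u v = 0" "cinner v u = 0"
    using assms(3) by (simp_all add: u(2) v(2) overlap_proj_line cinner_commute[of v u])
  hence "P ** Q = 0" "Q ** P = 0" by (simp_all add: u(2) v(2) proj_line_mult vec_eq_iff)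
  thus ?thesis using assms(3,4) by (simp add: proj_comb_def)
qed

lemma continuous_on_proj_comb:
  fixes P Q :: "'a::topological_space \<Rightarrow> complex^'n^'n"
  assumes "continuous_on S a" "continuous_on S b" "continuous_on S P" "continuous_on S Q"
    and "\<And>x. x \<in> S \<Longrightarrow> (a x)^2 + (2 * a x * b x + (b x)^2) * overlap (P x) (Q x) \<noteq> 0"
  shows "continuous_on S (\<lambda>x. proj_comb (a x) (b x) (P x) (Q x))"
proof -
  have mult: "continuous_on S (\<lambda>x. f x ** g x)"
    if "continuous_on S f" "continuous_on S g" for f g :: "'a \<Rightarrow> complex^'n^'n"
    unfolding matrix_matrix_mult_def
    by (intro continuous_on_vec_lambda continuous_on_sum continuous_intros
        continuous_on_component that)
  have "continuous_on S (\<lambda>x. overlap (P x) (Q x))"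
    unfolding overlap_def trace_def
    by (intro continuous_on_Re continuous_on_sum continuous_on_component mult assms)
  thus ?thesis
    unfolding proj_comb_def by (intro continuous_intros mult assms) (use assms(5) in auto)
qed

lemma proj_comb_towards:
  assumes "P \<in> CP" "Q \<in> CP" "0 < overlap P Q" "0 \<le> l" "l \<le> 1"
  shows "0 < (1-l)^2 + (2*(1-l)*l + l^2) * overlap P Q"
    and "proj_comb (1-l) l P Q \<in> CP"
    and "overlap P Q \<le> overlap P (proj_comb (1-l) l P Q)"
proof -
  define c where "c = overlap P Q"
  define d where "d = (1-l)^2 + (2*(1-l)*l + l^2) * c"
  have "d = c + (1-l)^2 * (1 - c)" by (simp add: d_def algebra_simps power2_eq_square)
  moreover have "(1-l)^2 \<le> 1" using assms(4,5) by (simp add: abs_le_iff power_le_one)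
  moreover have "c \<le> 1" using overlap_bounds[OF assms(1,2)] by (simp add: c_def)
  ultimately have d: "c \<le> d" "d \<le> 1"
    using mult_right_mono[of "(1-l)^2" 1 "1 - c"] by auto
  thus pos: "0 < (1-l)^2 + (2*(1-l)*l + l^2) * overlap P Q"
    using assms(3) by (simp add: c_def d_def)
  show "proj_comb (1-l) l P Q \<in> CP" by (rule proj_comb_CP(1)[OF assms(1,2) pos])
  have "c \<le> c / d" using d assms(3) by (simp add: c_def le_divide_eq)
  thus "overlap P Q \<le> overlap P (proj_comb (1-l) l P Q)"
    by (simp add: proj_comb_CP(2)[OF assms(1,2) pos] c_def d_def)
qed

lemma proj_comb_away:
  assumes "P \<in> CP" "Q \<in> CP" "overlap P Q < 1" "0 \<le> l" "l \<le> 1"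
  shows "0 < 1^2 + (2*1*(-l) + (-l)^2) * overlap P Q"
    and "proj_comb 1 (-l) P Q \<in> CP"
    and "overlap P (proj_comb 1 (-l) P Q) \<le> overlap P Q"
proof -
  define c where "c = overlap P Q"
  define d where "d = 1^2 + (2*1*(-l) + (-l)^2) * c"
  have c: "0 \<le> c" "c < 1" using overlap_bounds[OF assms(1,2)] assms(3) by (auto simp: c_def)
  have "d = (1 - c) + (1-l)^2 * c" by (simp add: d_def algebra_simps power2_eq_square)
  hence d: "0 < d" using c by (simp add: add_pos_nonneg)
  thus pos: "0 < 1^2 + (2*1*(-l) + (-l)^2) * overlap P Q" by (simp add: c_def d_def)
  show "proj_comb 1 (-l) P Q \<in> CP" by (rule proj_comb_CP(1)[OF assms(1,2) pos])
  have "d = (1-l)^2 + l * (2 - l) * (1 - c)" by (simp add: d_def algebra_simps power2_eq_square)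
  hence "(1-l)^2 \<le> d" using assms(4,5) c by simp
  hence "(1-l)^2 * c / d \<le> c"
    using d c mult_right_mono[of "(1-l)^2" d c] by (simp add: divide_le_eq mult.commute)
  thus "overlap P (proj_comb 1 (-l) P Q) \<le> overlap P Q"
    by (simp add: proj_comb_CP(2)[OF assms(1,2) pos] c_def d_def)
qed

lemma overlap_proj_comb_antipodal:
  assumes "P \<in> CP" "Q \<in> CP" "overlap P Q < 1"
  shows "overlap P (proj_comb 1 (-1) P Q) = 0"
  using proj_comb_CP(2)[OF assms(1,2) proj_comb_away(1)[OF assms, of 1]] by simp

section \<open>Deformation retraction of a diamond-shaped region\<close>

lemma deformation_retraction_homotopy_equivalence:
  assumes "X \<subseteq> Y" "continuous_on Y g" "g ` Y \<subseteq> X" "\<And>x. x \<in> X \<Longrightarrow> g x = x"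
    and "homotopic_with (\<lambda>h. True) (top_of_set Y) (top_of_set Y) id g"
  shows "homotopy_equivalence_map (top_of_set X) (top_of_set Y) id"
  unfolding homotopy_equivalence_map_def
proof (intro conjI exI)
  show "continuous_map (top_of_set X) (top_of_set Y) id"
    using assms(1) by (auto simp: continuous_on_id)
  show "continuous_map (top_of_set Y) (top_of_set X) g" using assms(2,3) by auto
  show "homotopic_with (\<lambda>h. True) (top_of_set X) (top_of_set X) (g \<circ> id) id"
    by (rule homotopic_with_equal) (use assms(1-4) in \<open>auto intro: continuous_on_subset\<close>)
  show "homotopic_with (\<lambda>h. True) (top_of_set Y) (top_of_set Y) (id \<circ> g) id"
    using homotopic_with_symD[OF assms(5)] by simp
qed

lemma homotopic_with_top_of_setI:
  assumes "continuous_on ({0..1::real} \<times> Y) h" "h ` ({0..1} \<times> Y) \<subseteq> Y"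
    and "\<And>x. x \<in> Y \<Longrightarrow> h (0, x) = f x" "\<And>x. x \<in> Y \<Longrightarrow> h (1, x) = g x"
  shows "homotopic_with (\<lambda>h. True) (top_of_set Y) (top_of_set Y) f g"
  by (subst homotopic_with) (use assms in \<open>auto intro!: exI[of _ h] simp: image_subset_iff\<close>)

definition diamond :: "'a set \<Rightarrow> ('a \<Rightarrow> 'a \<Rightarrow> real) \<Rightarrow> real \<Rightarrow> real \<Rightarrow> ('a \<times> 'a \<times> real) set"
  where "diamond C \<phi> r c = {(x, y, t). x \<in> C \<and> y \<in> C \<and> \<phi> x y - r < t - c \<and> t - c \<le> r - \<phi> x y}"

lemma mem_diamond [simp]:
  "(x, y, t) \<in> diamond C \<phi> r c \<longleftrightarrow> x \<in> C \<and> y \<in> C \<and> \<phi> x y - r < t - c \<and> t - c \<le> r - \<phi> x y"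
  by (simp add: diamond_def)

lemma homotopic_diamond_move_fibre:
  fixes C :: "'a::topological_space set" and \<phi> :: "'a \<Rightarrow> 'a \<Rightarrow> real" and r :: real
    and H :: "real \<Rightarrow> 'a \<Rightarrow> 'a \<Rightarrow> 'a"
  defines "D \<equiv> {(x, y). x \<in> C \<and> y \<in> C \<and> \<phi> x y < r}"
  assumes cont: "continuous_on ({0..1} \<times> D) (\<lambda>(l, x, y). H l x y)"
    and moves: "\<And>l x y. l \<in> {0..1} \<Longrightarrow> (x, y) \<in> D \<Longrightarrow> H l x y \<in> C \<and> \<phi> x (H l x y) \<le> \<phi> x y"
    and start: "\<And>x y. (x, y) \<in> D \<Longrightarrow> H 0 x y = y"
  shows "homotopic_with (\<lambda>h. True) (top_of_set (diamond C \<phi> r c)) (top_of_set (diamond C \<phi> r c))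
           id (\<lambda>(x, y, t). (x, H 1 x y, t))"
proof (rule homotopic_with_top_of_setI[where h = "\<lambda>(l, x, y, t). (x, H l x y, t)"])
  let ?Y = "diamond C \<phi> r c"
  have in_D: "(x, y) \<in> D" if "(x, y, t) \<in> ?Y" for x y t
    using that by (auto simp: D_def)
  have "continuous_on ({0..1} \<times> ?Y) ((\<lambda>(l, x, y). H l x y) \<circ> (\<lambda>(l, x, y, t). (l, x, y)))"
    by (intro continuous_on_compose continuous_on_subset[OF cont])
      (auto simp: case_prod_unfold intro!: continuous_intros in_D)
  thus "continuous_on ({0..1} \<times> ?Y) (\<lambda>(l, x, y, t). (x, H l x y, t))"
    by (auto simp: o_def case_prod_unfold intro!: continuous_intros)
  show "(\<lambda>(l, x, y, t). (x, H l x y, t)) ` ({0..1} \<times> ?Y) \<subseteq> ?Y"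
    using moves in_D by fastforce
qed (auto simp: start D_def)

text \<open>Once \<open>\<phi> x y = 0\<close>, the admissible heights form the convex interval \<open>(-r, r]\<close>.\<close>

lemma homotopic_diamond_slide_height:
  fixes C :: "'a::topological_space set" and \<phi> :: "'a \<Rightarrow> 'a \<Rightarrow> real" and f :: "'a \<Rightarrow> 'a \<Rightarrow> 'a"
  assumes e: "-r < e" "e \<le> r"
    and nonneg: "\<And>x y. x \<in> C \<Longrightarrow> y \<in> C \<Longrightarrow> 0 \<le> \<phi> x y"
    and cont: "continuous_on (diamond C \<phi> r c) (\<lambda>(x, y, t). f x y)"
    and zero: "\<And>x y t. (x, y, t) \<in> diamond C \<phi> r c \<Longrightarrow> f x y \<in> C \<and> \<phi> x (f x y) = 0"
  shows "homotopic_with (\<lambda>h. True) (top_of_set (diamond C \<phi> r c)) (top_of_set (diamond C \<phi> r c))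
           (\<lambda>(x, y, t). (x, f x y, t)) (\<lambda>(x, y, t). (x, f x y, c + e))"
proof (rule homotopic_with_top_of_setI
    [where h = "\<lambda>(l, x, y, t). (x, f x y, (1 - l) * t + l * (c + e))"])
  let ?Y = "diamond C \<phi> r c"
  have "continuous_on ({0..1} \<times> ?Y) ((\<lambda>(x, y, t). f x y) \<circ> snd)"
    by (intro continuous_on_compose continuous_on_subset[OF cont] continuous_intros) auto
  thus "continuous_on ({0..1} \<times> ?Y) (\<lambda>(l, x, y, t). (x, f x y, (1 - l) * t + l * (c + e)))"
    by (auto simp: o_def case_prod_unfold intro!: continuous_intros)
  show "(\<lambda>(l, x, y, t). (x, f x y, (1 - l) * t + l * (c + e))) ` ({0..1} \<times> ?Y) \<subseteq> ?Y"
  proof clarify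
    fix l x y t assume l: "l \<in> {0..1::real}" and Y: "(x, y, t) \<in> ?Y"
    have "t - c \<in> {-r<..r}" using Y nonneg by fastforce
    moreover have "e \<in> {-r<..r}" using e by simp
    ultimately have "(1 - l) *\<^sub>R (t - c) + l *\<^sub>R e \<in> {-r<..r}"
      using l by (intro convexD_alt) auto
    thus "(x, f x y, (1 - l) * t + l * (c + e)) \<in> ?Y"
      using Y zero[OF Y] by (simp add: algebra_simps)
  qed
qed auto

lemma homotopy_equivalence_diamond:
  fixes C :: "'a::topological_space set" and \<phi> :: "'a \<Rightarrow> 'a \<Rightarrow> real" and r :: real
    and H :: "real \<Rightarrow> 'a \<Rightarrow> 'a \<Rightarrow> 'a"
  defines "D \<equiv> {(x, y). x \<in> C \<and> y \<in> C \<and> \<phi> x y < r}"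
  assumes e: "-r < e" "e \<le> r"
    and nonneg: "\<And>x y. x \<in> C \<Longrightarrow> y \<in> C \<Longrightarrow> 0 \<le> \<phi> x y"
    and target: "\<And>x y. x \<in> C \<Longrightarrow> R x y \<Longrightarrow> y \<in> C \<and> \<phi> x y = 0"
    and cont: "continuous_on ({0..1} \<times> D) (\<lambda>(l, x, y). H l x y)"
    and moves: "\<And>l x y. l \<in> {0..1} \<Longrightarrow> (x, y) \<in> D \<Longrightarrow> H l x y \<in> C \<and> \<phi> x (H l x y) \<le> \<phi> x y"
    and start: "\<And>x y. (x, y) \<in> D \<Longrightarrow> H 0 x y = y"
    and finish: "\<And>x y. (x, y) \<in> D \<Longrightarrow> R x (H 1 x y)"
    and fixes_target: "\<And>x y. x \<in> C \<Longrightarrow> R x y \<Longrightarrow> H 1 x y = y"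
  shows "homotopy_equivalence_map (top_of_set {(x, y, c + e) | x y. x \<in> C \<and> R x y})
           (top_of_set (diamond C \<phi> r c)) id"
proof (rule deformation_retraction_homotopy_equivalence)
  let ?Y = "diamond C \<phi> r c"
  have in_D: "(x, y) \<in> D" if "(x, y, t) \<in> ?Y" for x y t
    using that by (auto simp: D_def)
  have "continuous_on ?Y ((\<lambda>(l, x, y). H l x y) \<circ> (\<lambda>(x, y, t). (1::real, x, y)))"
    by (intro continuous_on_compose continuous_on_subset[OF cont])
      (auto simp: case_prod_unfold intro!: continuous_intros in_D)
  hence cont_H1: "continuous_on ?Y (\<lambda>(x, y, t). H 1 x y)"
    by (simp add: o_def case_prod_unfold)
  thus "continuous_on ?Y (\<lambda>(x, y, t). (x, H 1 x y, c + e))"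
    by (auto simp: case_prod_unfold intro!: continuous_intros)
  have "homotopic_with (\<lambda>h. True) (top_of_set ?Y) (top_of_set ?Y) id (\<lambda>(x, y, t). (x, H 1 x y, t))"
    using homotopic_diamond_move_fibre[OF cont[unfolded D_def]] moves start by (simp add: D_def)
  moreover have "homotopic_with (\<lambda>h. True) (top_of_set ?Y) (top_of_set ?Y)
      (\<lambda>(x, y, t). (x, H 1 x y, t)) (\<lambda>(x, y, t). (x, H 1 x y, c + e))"
    using e nonneg cont_H1 target finish moves[of 1] in_D
    by (intro homotopic_diamond_slide_height) auto
  ultimately show "homotopic_with (\<lambda>h. True) (top_of_set ?Y) (top_of_set ?Y)
      id (\<lambda>(x, y, t). (x, H 1 x y, c + e))"
    by (rule homotopic_with_trans)
qed (use target e finish moves[of 1] fixes_target in \<open>auto simp: D_def\<close>)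

lemma Zset_layer_odd:
  assumes "CARD('n) \<ge> 2" "odd i"
  shows "Zset i \<inter> ((CP \<times> CP \<times> UNIV) - Zset (Suc i))
           = diamond (CP :: (complex^'n^'n) set) fs_dist pi (real i * pi)"
  using assms by (auto simp: Zset_def diamond_def fs_setdist_antipodal algebra_simps)

lemma Zset_layer_even:
  assumes "CARD('n) \<ge> 2" "even i"
  shows "Zset i \<inter> ((CP \<times> CP \<times> UNIV) - Zset (Suc i))
           = diamond (CP :: (complex^'n^'n) set) (\<lambda>x y. pi - fs_dist x y) pi (real i * pi)"
  using assms by (auto simp: Zset_def diamond_def fs_setdist_antipodal algebra_simps)

lemma homotopy_equivalence_odd_layer:
  fixes \<epsilon> :: real
  assumes "CARD('n) \<ge> 2" "0 < \<epsilon>" "\<epsilon> < pi" "odd i"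
  shows "homotopy_equivalence_map
           (top_of_set {(x, x, real i * pi + \<epsilon>) | x :: complex^'n^'n. x \<in> CP})
           (top_of_set (Zset i \<inter> ((CP \<times> CP \<times> UNIV) - Zset (Suc i)))) id"
proof -
  let ?D = "{(x, y). x \<in> CP \<and> y \<in> CP \<and> fs_dist x y < pi}
    :: ((complex^'n^'n) \<times> (complex^'n^'n)) set"
  have overlap_pos: "0 < overlap x y" if "(x, y) \<in> ?D" for x y
    using that fs_dist_lt_pi_iff by auto
  have "homotopy_equivalence_map
          (top_of_set {(x, y, real i * pi + \<epsilon>) | x y :: complex^'n^'n. x \<in> CP \<and> y = x})
          (top_of_set (diamond CP fs_dist pi (real i * pi))) id"
  proof (rule homotopy_equivalence_diamond[where H = "\<lambda>l x y. proj_comb (1 - l) l x y"])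
    show "continuous_on ({0..1} \<times> ?D) (\<lambda>(l, x, y). proj_comb (1 - l) l x y)"
      unfolding case_prod_unfold
      by (intro continuous_on_proj_comb continuous_intros)
        (use proj_comb_towards(1) overlap_pos in fastforce)
    fix l :: real and x y
    assume "l \<in> {0..1}" "(x, y) \<in> ?D"
    thus "proj_comb (1 - l) l x y \<in> CP \<and> fs_dist x (proj_comb (1 - l) l x y) \<le> fs_dist x y"
      using proj_comb_towards[OF _ _ overlap_pos] by (auto simp: fs_dist_le_iff)
  next
    fix x y
    assume D: "(x, y) \<in> ?D"
    show "proj_comb (1 - 0) 0 x y = y" by (simp add: proj_comb_1_0)
    show "proj_comb (1 - 1) 1 x y = x" using overlap_pos[OF D] by (simp add: proj_comb_0_1)
  next
    fix x y :: "complex^'n^'n"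
    assume "x \<in> CP" "y = x"
    thus "y \<in> CP \<and> fs_dist x y = 0" and "proj_comb (1 - 1) 1 x y = y"
      by (simp_all add: fs_dist_overlap overlap_self proj_comb_0_1)
  qed (use assms fs_dist_bounds in auto)
  moreover have "{(x, x, real i * pi + \<epsilon>) | x :: complex^'n^'n. x \<in> CP}
      = {(x, y, real i * pi + \<epsilon>) | x y. x \<in> CP \<and> y = x}" by blast
  ultimately show ?thesis by (simp only: Zset_layer_odd[OF assms(1,4)])
qed

lemma homotopy_equivalence_even_layer:
  fixes \<epsilon> :: real
  assumes "CARD('n) \<ge> 2" "0 < \<epsilon>" "\<epsilon> < pi" "even i"
  shows "homotopy_equivalence_map
           (top_of_set {(x, y, real i * pi + \<epsilon>) | x y :: complex^'n^'n.
              x \<in> CP \<and> y \<in> antipodal x})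
           (top_of_set (Zset i \<inter> ((CP \<times> CP \<times> UNIV) - Zset (Suc i)))) id"
proof -
  let ?D = "{(x, y). x \<in> CP \<and> y \<in> CP \<and> pi - fs_dist x y < pi}
    :: ((complex^'n^'n) \<times> (complex^'n^'n)) set"
  have overlap_lt_1: "overlap x y < 1" if "(x, y) \<in> ?D" for x y
    using that fs_dist_pos_iff by auto
  have "homotopy_equivalence_map
          (top_of_set {(x, y, real i * pi + \<epsilon>) | x y :: complex^'n^'n.
             x \<in> CP \<and> y \<in> antipodal x})
          (top_of_set (diamond CP (\<lambda>x y. pi - fs_dist x y) pi (real i * pi))) id"
  proof (rule homotopy_equivalence_diamond[where H = "\<lambda>l x y. proj_comb 1 (-l) x y"])
    show "continuous_on ({0..1} \<times> ?D) (\<lambda>(l, x, y). proj_comb 1 (-l) x y)"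
      unfolding case_prod_unfold
      by (intro continuous_on_proj_comb continuous_intros)
        (use proj_comb_away(1) overlap_lt_1 in fastforce)
    fix l :: real and x y
    assume "l \<in> {0..1}" "(x, y) \<in> ?D"
    thus "proj_comb 1 (-l) x y \<in> CP
        \<and> pi - fs_dist x (proj_comb 1 (-l) x y) \<le> pi - fs_dist x y"
      using proj_comb_away[OF _ _ overlap_lt_1] by (auto simp: fs_dist_le_iff)
  next
    fix x y
    assume D: "(x, y) \<in> ?D"
    show "proj_comb 1 (-0) x y = y" by (simp add: proj_comb_1_0)
    show "proj_comb 1 (-1) x y \<in> antipodal x"
      using D proj_comb_away(2)[OF _ _ overlap_lt_1[OF D], of 1]
        overlap_proj_comb_antipodal[OF _ _ overlap_lt_1[OF D]]
      by (auto simp: antipodal_iff)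
  next
    fix x y :: "complex^'n^'n"
    assume x: "x \<in> CP" and y: "y \<in> antipodal x"
    thus "y \<in> CP \<and> pi - fs_dist x y = 0" by (simp add: antipodal_def)
    show "proj_comb 1 (-1) x y = y"
      using x y by (intro proj_comb_orthogonal) (auto simp: antipodal_iff)
  qed (use assms fs_dist_bounds in auto)
  thus ?thesis by (simp only: Zset_layer_even[OF assms(1,4)])
qed

theorem lemma4p3:
  fixes \<epsilon> :: real and i :: nat
  assumes "CARD('m::finite) \<ge> 2"
    and "0 < \<epsilon>" and "\<epsilon> < pi" and "i > 0"
  shows "(odd i \<longrightarrow>
           homotopy_equivalence_map
             (subtopology euclidean
                {(x, x, real i * pi + \<epsilon>) | x :: complex^'m^'m. x \<in> CP})
             (subtopology euclidean
                (Zset i \<inter> ((CP \<times> CP \<times> UNIV) - Zset (Suc i))))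
             id)
       \<and> (even i \<longrightarrow>
           homotopy_equivalence_map
             (subtopology euclidean
                {(x, y, real i * pi + \<epsilon>) | x y :: complex^'m^'m. x \<in> CP \<and> y \<in> antipodal x})
             (subtopology euclidean
                (Zset i \<inter> ((CP \<times> CP \<times> UNIV) - Zset (Suc i))))
             id)"
  using homotopy_equivalence_odd_layer[OF assms(1-3)] homotopy_equivalence_even_layer[OF assms(1-3)]
  by blast

end
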